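(* Let $S>1/2$ and $\beta<1/2$. Then for every $t\in\mathbb{R}$ the trilinear operator $R_3$ defined in the context satisfies $$\|R_3(u,v,w)\|_{\dot H^{-S}}\le c_6'(S,\beta)\|u\|_{\dot H^{-\beta}}\|v\|_{\dot H^0}\|w\|_{\dot H^0},$$ with a constant $c_6'(S,\beta)$ depending only on $S,\beta$.
   Context: Write $\mathbb{Z}_0=\mathbb{Z}\setminus\{0\}$. For $s\in\mathbb{R}$, $\dot H^s$ denotes the Hilbert space of complex sequences $v=(v_k)_{k\in\mathbb{Z}_0}$ with $\|v\|_{\dot H^s}^2=\sum_{k\in\mathbb{Z}_0}|k|^{2s}|v_k|^2<\infty$. For $t\in\mathbb{R}$, $$R_3(u,v,w)_k=\sum_{k_1+k_2+k_3=k,\ k_1,k_2,k_3\in\mathbb{Z}_0}\frac{e^{3i(k_1+k_2)(k_2+k_3)(k_3+k_1)t}}{k_1}u_{k_1}v_{k_2}w_{k_3},\qquad k\in\mathbb{Z}_0.$$ *)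

theory Defs
  imports "HOL-Analysis.Analysis"
begin

text \<open>Sequences indexed by the nonzero integers are modelled as functions
  int \<Rightarrow> complex; the value at index 0 is ignored everywhere.\<close>

definition Z0 :: "int set" where
  "Z0 = UNIV - {0}"

definition in_Hdot :: "real \<Rightarrow> (int \<Rightarrow> complex) \<Rightarrow> bool" where
  "in_Hdot s v \<longleftrightarrow> (\<lambda>k. real_of_int \<bar>k\<bar> powr (2 * s) * (cmod (v k))\<^sup>2) summable_on Z0"

definition Hdot_norm :: "real \<Rightarrow> (int \<Rightarrow> complex) \<Rightarrow> real" where
  "Hdot_norm s v = sqrt (\<Sum>\<^sub>\<infinity>k\<in>Z0. real_of_int \<bar>k\<bar> powr (2 * s) * (cmod (v k))\<^sup>2)"

definition R3_index :: "int \<Rightarrow> (int \<times> int \<times> int) set" where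
  "R3_index k = {(k1, k2, k3). k1 + k2 + k3 = k \<and> k1 \<noteq> 0 \<and> k2 \<noteq> 0 \<and> k3 \<noteq> 0}"

definition R3_term :: "real \<Rightarrow> (int \<Rightarrow> complex) \<Rightarrow> (int \<Rightarrow> complex) \<Rightarrow> (int \<Rightarrow> complex)
    \<Rightarrow> int \<times> int \<times> int \<Rightarrow> complex" where
  "R3_term t u v w = (\<lambda>(k1, k2, k3).
     exp (\<i> * of_real (3 * real_of_int ((k1 + k2) * (k2 + k3) * (k3 + k1)) * t))
       / of_int k1 * u k1 * v k2 * w k3)"

definition R3 :: "real \<Rightarrow> (int \<Rightarrow> complex) \<Rightarrow> (int \<Rightarrow> complex) \<Rightarrow> (int \<Rightarrow> complex)
    \<Rightarrow> int \<Rightarrow> complex" where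
  "R3 t u v w k = (\<Sum>\<^sub>\<infinity>x\<in>R3_index k. R3_term t u v w x)"

end

theory Submission imports Defs begin

text \<open>For fixed k, substituting k3 = k - k1 - k2 turns the sum into a sum over k1 of
  |u k1| / |k1| times a convolution of |v| with |w|. By Cauchy-Schwarz the convolution is at most
  the product of the l2 norms of v and w, and the sum of |u k1| / |k1| is at most the H^(-\<beta>)
  norm of u times the square root of the sum of |k1| powr (2\<beta> - 2), which is finite because
  \<beta> < 1/2. Hence R3 is bounded uniformly in k, and a bounded sequence lies in H^(-S) because
  the sum of |k| powr (-2S) is finite for S > 1/2.\<close>

lemma Z0_iff [simp]: "k \<in> Z0 \<longleftrightarrow> k \<noteq> 0"
  unfolding Z0_def by auto

lemma Cauchy_Schwarz_infsum:
  fixes f g :: "'a \<Rightarrow> real"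
  assumes f_nonneg: "\<And>x. x \<in> X \<Longrightarrow> f x \<ge> 0" and g_nonneg: "\<And>x. x \<in> X \<Longrightarrow> g x \<ge> 0"
    and f_sq: "(\<lambda>x. (f x)\<^sup>2) summable_on X" and g_sq: "(\<lambda>x. (g x)\<^sup>2) summable_on X"
  shows "(\<lambda>x. f x * g x) summable_on X"
    and "(\<Sum>\<^sub>\<infinity>x\<in>X. f x * g x) \<le> sqrt (\<Sum>\<^sub>\<infinity>x\<in>X. (f x)\<^sup>2) * sqrt (\<Sum>\<^sub>\<infinity>x\<in>X. (g x)\<^sup>2)"
proof -
  let ?B = "sqrt (\<Sum>\<^sub>\<infinity>x\<in>X. (f x)\<^sup>2) * sqrt (\<Sum>\<^sub>\<infinity>x\<in>X. (g x)\<^sup>2)"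
  have finite_bound: "(\<Sum>x\<in>F. f x * g x) \<le> ?B" if "finite F" "F \<subseteq> X" for F
  proof -
    have "(\<Sum>x\<in>F. f x * g x)\<^sup>2 \<le> (\<Sum>x\<in>F. (f x)\<^sup>2) * (\<Sum>x\<in>F. (g x)\<^sup>2)"
      by (rule Cauchy_Schwarz_ineq_sum)
    also have "\<dots> \<le> (\<Sum>\<^sub>\<infinity>x\<in>X. (f x)\<^sup>2) * (\<Sum>\<^sub>\<infinity>x\<in>X. (g x)\<^sup>2)"
      by (intro mult_mono finite_sum_le_infsum f_sq g_sq that sum_nonneg infsum_nonneg) auto
    finally have "\<bar>\<Sum>x\<in>F. f x * g x\<bar> \<le> sqrt ((\<Sum>\<^sub>\<infinity>x\<in>X. (f x)\<^sup>2) * (\<Sum>\<^sub>\<infinity>x\<in>X. (g x)\<^sup>2))"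
      using real_le_rsqrt real_sqrt_abs by (metis real_sqrt_le_iff)
    then show ?thesis by (simp add: real_sqrt_mult)
  qed
  show summable: "(\<lambda>x. f x * g x) summable_on X"
    using f_nonneg g_nonneg finite_bound
    by (intro nonneg_bdd_above_summable_on) (auto intro!: bdd_aboveI2)
  show "(\<Sum>\<^sub>\<infinity>x\<in>X. f x * g x) \<le> ?B"
    using summable finite_bound by (rule infsum_le_finite_sums)
qed

lemma summable_on_Z0_powr:
  assumes "p > 1"
  shows "(\<lambda>k::int. real_of_int \<bar>k\<bar> powr (-p)) summable_on Z0"
proof -
  have "summable (\<lambda>n::nat. real n powr (-p))"
    using assms by (subst summable_real_powr_iff) simp
  then have nat_summable: "(\<lambda>n::nat. real n powr (-p)) summable_on UNIV"
    by (subst summable_on_UNIV_nonneg_real_iff) auto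
  have pos: "(\<lambda>k::int. real_of_int \<bar>k\<bar> powr (-p)) summable_on {k. k > 0}"
  proof -
    have "(\<lambda>n::nat. real_of_int \<bar>int n\<bar> powr (-p)) summable_on {n. n > 0}"
      using summable_on_subset[OF nat_summable] by simp
    then show ?thesis
      by (subst (asm) summable_on_reindex_bij_witness[where j = int and i = nat and T = "{k. k > 0}"]) auto
  qed
  have neg: "(\<lambda>k::int. real_of_int \<bar>k\<bar> powr (-p)) summable_on {k. k < 0}"
  proof -
    have "(\<lambda>n::nat. real_of_int \<bar>- int n\<bar> powr (-p)) summable_on {n. n > 0}"
      using summable_on_subset[OF nat_summable] by simp
    then show ?thesis
      by (subst (asm) summable_on_reindex_bij_witness[where j = "\<lambda>n. - int n" and i = "\<lambda>k. nat (-k)"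
            and T = "{k. k < 0}"]) auto
  qed
  have "Z0 = {k. k > 0} \<union> {k. k < 0}" by auto
  then show ?thesis using summable_on_union[OF pos neg] by simp
qed

lemma Hdot_norm_nonneg: "Hdot_norm s v \<ge> 0"
  unfolding Hdot_norm_def by (intro real_sqrt_ge_zero infsum_nonneg) simp

lemma in_Hdot_0_iff: "in_Hdot 0 v \<longleftrightarrow> (\<lambda>k. (cmod (v k))\<^sup>2) summable_on Z0"
  unfolding in_Hdot_def by (rule summable_on_cong) simp

lemma Hdot_norm_0: "Hdot_norm 0 v = sqrt (\<Sum>\<^sub>\<infinity>k\<in>Z0. (cmod (v k))\<^sup>2)"
  unfolding Hdot_norm_def by (rule arg_cong[where f = sqrt], rule infsum_cong) simp

lemma powr_square: "((x::real) powr a)\<^sup>2 = x powr (2 * a)"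
  by (simp add: power2_eq_square powr_add[symmetric])

lemma
  assumes "\<beta> < 1/2" and "in_Hdot (-\<beta>) u"
  shows summable_on_Z0_norm_div: "(\<lambda>k. cmod (u k) / real_of_int \<bar>k\<bar>) summable_on Z0"
    and infsum_Z0_norm_div_le: "(\<Sum>\<^sub>\<infinity>k\<in>Z0. cmod (u k) / real_of_int \<bar>k\<bar>)
           \<le> sqrt (\<Sum>\<^sub>\<infinity>k\<in>Z0. real_of_int \<bar>k\<bar> powr (2 * \<beta> - 2)) * Hdot_norm (-\<beta>) u"
proof -
  define f where "f k = real_of_int \<bar>k\<bar> powr (\<beta> - 1)" for k
  define g where "g k = real_of_int \<bar>k\<bar> powr (-\<beta>) * cmod (u k)" for k
  have f_sq: "(f k)\<^sup>2 = real_of_int \<bar>k\<bar> powr (2 * \<beta> - 2)" for k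
    unfolding f_def powr_square by (simp add: algebra_simps)
  have g_sq: "(g k)\<^sup>2 = real_of_int \<bar>k\<bar> powr (2 * - \<beta>) * (cmod (u k))\<^sup>2" for k
    unfolding g_def power_mult_distrib powr_square ..
  have fg: "f k * g k = cmod (u k) / real_of_int \<bar>k\<bar>" if "k \<in> Z0" for k
  proof -
    have "real_of_int \<bar>k\<bar> powr (\<beta> - 1) * real_of_int \<bar>k\<bar> powr (-\<beta>) = real_of_int \<bar>k\<bar> powr (-1)"
      using that by (simp add: powr_add[symmetric])
    then show ?thesis
      unfolding f_def g_def by (simp add: powr_minus divide_inverse algebra_simps)
  qed
  have "(\<lambda>k. (f k)\<^sup>2) summable_on Z0"
    unfolding f_sq using summable_on_Z0_powr[of "2 - 2 * \<beta>"] assms(1) by simp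
  moreover have "(\<lambda>k. (g k)\<^sup>2) summable_on Z0"
    using assms(2) unfolding in_Hdot_def g_sq .
  ultimately have summable: "(\<lambda>k. f k * g k) summable_on Z0"
    and bound: "(\<Sum>\<^sub>\<infinity>k\<in>Z0. f k * g k) \<le> sqrt (\<Sum>\<^sub>\<infinity>k\<in>Z0. (f k)\<^sup>2) * sqrt (\<Sum>\<^sub>\<infinity>k\<in>Z0. (g k)\<^sup>2)"
    using Cauchy_Schwarz_infsum[of Z0 f g] by (auto simp: f_def g_def)
  show "(\<lambda>k. cmod (u k) / real_of_int \<bar>k\<bar>) summable_on Z0"
    using summable_on_cong[OF fg] summable ..
  have "(\<Sum>\<^sub>\<infinity>k\<in>Z0. f k * g k) = (\<Sum>\<^sub>\<infinity>k\<in>Z0. cmod (u k) / real_of_int \<bar>k\<bar>)"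
    using fg by (rule infsum_cong)
  then show "(\<Sum>\<^sub>\<infinity>k\<in>Z0. cmod (u k) / real_of_int \<bar>k\<bar>)
      \<le> sqrt (\<Sum>\<^sub>\<infinity>k\<in>Z0. real_of_int \<bar>k\<bar> powr (2 * \<beta> - 2)) * Hdot_norm (-\<beta>) u"
    using bound unfolding f_sq g_sq Hdot_norm_def by simp
qed

definition conv_index :: "int \<Rightarrow> int set" where
  "conv_index m = {j. j \<noteq> 0 \<and> m - j \<noteq> 0}"

lemma
  assumes "in_Hdot 0 v" and "in_Hdot 0 w"
  shows summable_on_conv_index: "(\<lambda>j. cmod (v j) * cmod (w (m - j))) summable_on conv_index m"
    and infsum_conv_index_le:
      "(\<Sum>\<^sub>\<infinity>j\<in>conv_index m. cmod (v j) * cmod (w (m - j))) \<le> Hdot_norm 0 v * Hdot_norm 0 w"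
proof -
  have sub: "conv_index m \<subseteq> Z0" unfolding conv_index_def by auto
  have reflect: "bij_betw (\<lambda>j. m - j) (conv_index m) (conv_index m)"
    by (rule bij_betw_byWitness[where f' = "\<lambda>j. m - j"]) (auto simp: conv_index_def)
  have v_sq: "(\<lambda>j. (cmod (v j))\<^sup>2) summable_on conv_index m"
    using assms(1) sub unfolding in_Hdot_0_iff by (rule summable_on_subset)
  have w_sq_unshifted: "(\<lambda>j. (cmod (w j))\<^sup>2) summable_on conv_index m"
    using assms(2) sub unfolding in_Hdot_0_iff by (rule summable_on_subset)
  then have w_sq: "(\<lambda>j. (cmod (w (m - j)))\<^sup>2) summable_on conv_index m"
    using summable_on_reindex_bij_betw[OF reflect, of "\<lambda>j. (cmod (w j))\<^sup>2"] by simp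
  have v_le: "(\<Sum>\<^sub>\<infinity>j\<in>conv_index m. (cmod (v j))\<^sup>2) \<le> (\<Sum>\<^sub>\<infinity>j\<in>Z0. (cmod (v j))\<^sup>2)"
    using v_sq assms(1) sub unfolding in_Hdot_0_iff by (rule infsum_mono2) auto
  have "(\<Sum>\<^sub>\<infinity>j\<in>conv_index m. (cmod (w j))\<^sup>2) \<le> (\<Sum>\<^sub>\<infinity>j\<in>Z0. (cmod (w j))\<^sup>2)"
    using w_sq_unshifted assms(2) sub unfolding in_Hdot_0_iff by (rule infsum_mono2) auto
  then have w_le: "(\<Sum>\<^sub>\<infinity>j\<in>conv_index m. (cmod (w (m - j)))\<^sup>2) \<le> (\<Sum>\<^sub>\<infinity>j\<in>Z0. (cmod (w j))\<^sup>2)"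
    using infsum_reindex_bij_betw[OF reflect, of "\<lambda>j. (cmod (w j))\<^sup>2"] by simp
  note CS = Cauchy_Schwarz_infsum[of "conv_index m" "\<lambda>j. cmod (v j)" "\<lambda>j. cmod (w (m - j))", OF _ _ v_sq w_sq]
  show "(\<lambda>j. cmod (v j) * cmod (w (m - j))) summable_on conv_index m"
    using CS(1) by simp
  have "sqrt (\<Sum>\<^sub>\<infinity>j\<in>conv_index m. (cmod (v j))\<^sup>2) * sqrt (\<Sum>\<^sub>\<infinity>j\<in>conv_index m. (cmod (w (m - j)))\<^sup>2)
      \<le> Hdot_norm 0 v * Hdot_norm 0 w"
    unfolding Hdot_norm_0 by (intro mult_mono real_sqrt_le_mono v_le w_le) (auto intro!: infsum_nonneg)
  with CS(2) show "(\<Sum>\<^sub>\<infinity>j\<in>conv_index m. cmod (v j) * cmod (w (m - j))) \<le> Hdot_norm 0 v * Hdot_norm 0 w"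
    by simp
qed

lemma
  fixes a :: "'a \<Rightarrow> real" and g :: "'a \<Rightarrow> 'b \<Rightarrow> real"
  assumes a: "a summable_on A" "\<And>x. x \<in> A \<Longrightarrow> a x \<ge> 0"
    and g: "\<And>x. x \<in> A \<Longrightarrow> g x summable_on B x" "\<And>x y. x \<in> A \<Longrightarrow> y \<in> B x \<Longrightarrow> g x y \<ge> 0"
    and g_le: "\<And>x. x \<in> A \<Longrightarrow> infsum (g x) (B x) \<le> c"
  shows summable_on_Sigma_mult: "(\<lambda>(x, y). a x * g x y) summable_on Sigma A B"
    and infsum_Sigma_mult_le: "infsum (\<lambda>(x, y). a x * g x y) (Sigma A B) \<le> infsum a A * c"
proof -
  define G where "G x = a x * infsum (g x) (B x)" for x
  have G_le: "G x \<le> a x * c" if "x \<in> A" for x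
    unfolding G_def using that a(2) g_le by (simp add: mult_left_mono)
  have ac: "(\<lambda>x. a x * c) summable_on A"
    using a(1) by (rule summable_on_cmult_left)
  have G: "G summable_on A"
    using ac by (rule summable_on_comparison_test) (use G_le a(2) g(2) in \<open>auto simp: G_def infsum_nonneg\<close>)
  show summable: "(\<lambda>(x, y). a x * g x y) summable_on Sigma A B"
  proof (rule summable_on_SigmaI[where g = G])
    show "((\<lambda>y. case (x, y) of (x, y) \<Rightarrow> a x * g x y) has_sum G x) (B x)" if "x \<in> A" for x
      unfolding G_def using has_sum_cmult_right[OF has_sum_infsum[OF g(1)[OF that]]] by simp
  qed (use G a(2) g(2) in auto)
  have "infsum (\<lambda>(x, y). a x * g x y) (Sigma A B) = infsum G A"
    using infsum_Sigma_banach[OF summable] by (simp add: G_def[abs_def] infsum_cmult_right')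
  also have "\<dots> \<le> infsum (\<lambda>x. a x * c) A"
    using G ac G_le by (rule infsum_mono)
  also have "\<dots> = infsum a A * c"
    by (rule infsum_cmult_left')
  finally show "infsum (\<lambda>(x, y). a x * g x y) (Sigma A B) \<le> infsum a A * c" .
qed

lemma bij_betw_R3_index:
  "bij_betw (\<lambda>(k1, k2). (k1, k2, k - k1 - k2)) (SIGMA k1:Z0. conv_index (k - k1)) (R3_index k)"
  by (rule bij_betw_byWitness[where f' = "\<lambda>(k1, k2, k3). (k1, k2)"])
     (auto simp: R3_index_def conv_index_def)

lemma norm_R3_term:
  "norm (R3_term t u v w (k1, k2, k3)) = cmod (u k1) / real_of_int \<bar>k1\<bar> * (cmod (v k2) * cmod (w k3))"
  unfolding R3_term_def by (simp add: norm_mult norm_divide)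

lemma
  assumes "\<beta> < 1/2" and u: "in_Hdot (-\<beta>) u" and v: "in_Hdot 0 v" and w: "in_Hdot 0 w"
  shows abs_summable_R3_term: "(\<lambda>x. norm (R3_term t u v w x)) summable_on R3_index k"
    and infsum_norm_R3_term_le: "(\<Sum>\<^sub>\<infinity>x\<in>R3_index k. norm (R3_term t u v w x))
      \<le> sqrt (\<Sum>\<^sub>\<infinity>k\<in>Z0. real_of_int \<bar>k\<bar> powr (2 * \<beta> - 2))
          * Hdot_norm (-\<beta>) u * Hdot_norm 0 v * Hdot_norm 0 w"
proof -
  define a where "a k1 = cmod (u k1) / real_of_int \<bar>k1\<bar>" for k1
  define g where "g k1 k2 = cmod (v k2) * cmod (w (k - k1 - k2))" for k1 k2
  have norm_eq: "(\<lambda>p. norm (R3_term t u v w ((\<lambda>(k1, k2). (k1, k2, k - k1 - k2)) p)))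
      = (\<lambda>(k1, k2). a k1 * g k1 k2)"
    by (auto simp: a_def g_def norm_R3_term)
  have a_nonneg: "a k1 \<ge> 0" and g_nonneg: "g k1 k2 \<ge> 0" for k1 k2
    by (simp_all add: a_def g_def)
  note Sigma_facts = summable_on_Sigma_mult infsum_Sigma_mult_le
  note Sigma_facts = Sigma_facts[of a Z0 g "\<lambda>k1. conv_index (k - k1)" "Hdot_norm 0 v * Hdot_norm 0 w",
      OF summable_on_Z0_norm_div[OF assms(1) u, folded a_def] a_nonneg
         summable_on_conv_index[OF v w, of "k - _", folded g_def] g_nonneg
         infsum_conv_index_le[OF v w, of "k - _", folded g_def]]
  show "(\<lambda>x. norm (R3_term t u v w x)) summable_on R3_index k"
    using Sigma_facts(1) summable_on_reindex_bij_betw[OF bij_betw_R3_index[of k], of "\<lambda>x. norm (R3_term t u v w x)"]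
    unfolding norm_eq by simp
  have "(\<Sum>\<^sub>\<infinity>x\<in>R3_index k. norm (R3_term t u v w x)) \<le> infsum a Z0 * (Hdot_norm 0 v * Hdot_norm 0 w)"
    using Sigma_facts(2) infsum_reindex_bij_betw[OF bij_betw_R3_index[of k], of "\<lambda>x. norm (R3_term t u v w x)"]
    unfolding norm_eq by simp
  also have "\<dots> \<le> sqrt (\<Sum>\<^sub>\<infinity>k\<in>Z0. real_of_int \<bar>k\<bar> powr (2 * \<beta> - 2)) * Hdot_norm (-\<beta>) u
      * (Hdot_norm 0 v * Hdot_norm 0 w)"
    using infsum_Z0_norm_div_le[OF assms(1) u, folded a_def]
    by (rule mult_right_mono) (simp add: Hdot_norm_nonneg)
  finally show "(\<Sum>\<^sub>\<infinity>x\<in>R3_index k. norm (R3_term t u v w x))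
      \<le> sqrt (\<Sum>\<^sub>\<infinity>k\<in>Z0. real_of_int \<bar>k\<bar> powr (2 * \<beta> - 2))
          * Hdot_norm (-\<beta>) u * Hdot_norm 0 v * Hdot_norm 0 w"
    by (simp only: mult_ac)
qed

lemma
  assumes "S > 1/2" and bounded: "\<And>k. k \<in> Z0 \<Longrightarrow> cmod (f k) \<le> M"
  shows in_Hdot_neg_if_bounded: "in_Hdot (-S) f"
    and Hdot_norm_neg_le_bound:
      "Hdot_norm (-S) f \<le> sqrt (\<Sum>\<^sub>\<infinity>k\<in>Z0. real_of_int \<bar>k\<bar> powr (- 2 * S)) * M"
proof -
  have M_nonneg: "M \<ge> 0"
    using bounded[of 1] by (meson norm_ge_zero order_trans Z0_iff one_neq_zero)
  have weights: "(\<lambda>k. real_of_int \<bar>k\<bar> powr (- 2 * S)) summable_on Z0"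
    using summable_on_Z0_powr[of "2 * S"] assms(1) by simp
  then have majorant: "(\<lambda>k. real_of_int \<bar>k\<bar> powr (- 2 * S) * M\<^sup>2) summable_on Z0"
    by (rule summable_on_cmult_left)
  have square_bound: "(cmod (f k))\<^sup>2 \<le> M\<^sup>2" if "k \<in> Z0" for k
    using bounded[OF that] by (intro power_mono) simp_all
  have termwise: "real_of_int \<bar>k\<bar> powr (2 * - S) * (cmod (f k))\<^sup>2 \<le> real_of_int \<bar>k\<bar> powr (- 2 * S) * M\<^sup>2"
    if "k \<in> Z0" for k
    using square_bound[OF that] by (simp add: mult_left_mono)
  have summable: "(\<lambda>k. real_of_int \<bar>k\<bar> powr (2 * - S) * (cmod (f k))\<^sup>2) summable_on Z0"
    using majorant by (rule summable_on_comparison_test) (use termwise in auto)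
  then show "in_Hdot (-S) f"
    unfolding in_Hdot_def .
  have "(\<Sum>\<^sub>\<infinity>k\<in>Z0. real_of_int \<bar>k\<bar> powr (2 * - S) * (cmod (f k))\<^sup>2)
      \<le> (\<Sum>\<^sub>\<infinity>k\<in>Z0. real_of_int \<bar>k\<bar> powr (- 2 * S)) * M\<^sup>2"
    using infsum_mono[OF summable majorant termwise] by (simp add: infsum_cmult_left')
  then have "Hdot_norm (-S) f \<le> sqrt ((\<Sum>\<^sub>\<infinity>k\<in>Z0. real_of_int \<bar>k\<bar> powr (- 2 * S)) * M\<^sup>2)"
    unfolding Hdot_norm_def by (rule real_sqrt_le_mono)
  also have "\<dots> = sqrt (\<Sum>\<^sub>\<infinity>k\<in>Z0. real_of_int \<bar>k\<bar> powr (- 2 * S)) * M"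
    using M_nonneg by (simp add: real_sqrt_mult)
  finally show "Hdot_norm (-S) f \<le> sqrt (\<Sum>\<^sub>\<infinity>k\<in>Z0. real_of_int \<bar>k\<bar> powr (- 2 * S)) * M" .
qed

theorem lemma7p18:
  fixes S \<beta> :: real
  assumes "S > 1/2" and "\<beta> < 1/2"
  shows "\<exists>C. \<forall>t u v w. in_Hdot (-\<beta>) u \<longrightarrow> in_Hdot 0 v \<longrightarrow> in_Hdot 0 w \<longrightarrow>
           (\<forall>k\<in>Z0. R3_term t u v w summable_on R3_index k) \<and>
           in_Hdot (-S) (R3 t u v w) \<and>
           Hdot_norm (-S) (R3 t u v w) \<le> C * Hdot_norm (-\<beta>) u * Hdot_norm 0 v * Hdot_norm 0 w"
proof (intro exI allI impI conjI ballI)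
  let ?A = "sqrt (\<Sum>\<^sub>\<infinity>k\<in>Z0. real_of_int \<bar>k\<bar> powr (2 * \<beta> - 2))"
  let ?B = "sqrt (\<Sum>\<^sub>\<infinity>k\<in>Z0. real_of_int \<bar>k\<bar> powr (- 2 * S))"
  fix t u v w
  assume uvw: "in_Hdot (-\<beta>) u" "in_Hdot 0 v" "in_Hdot 0 w"
  let ?M = "?A * Hdot_norm (-\<beta>) u * Hdot_norm 0 v * Hdot_norm 0 w"
  show "R3_term t u v w summable_on R3_index k" for k
    using abs_summable_R3_term[OF assms(2) uvw] by (rule abs_summable_summable)
  have R3_bound: "cmod (R3 t u v w k) \<le> ?M" for k
    unfolding R3_def
    using norm_infsum_bound[OF abs_summable_R3_term[OF assms(2) uvw]] infsum_norm_R3_term_le[OF assms(2) uvw]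
    by (rule order_trans)
  show "in_Hdot (-S) (R3 t u v w)"
    using assms(1) R3_bound by (rule in_Hdot_neg_if_bounded)
  show "Hdot_norm (-S) (R3 t u v w) \<le> ?B * ?A * Hdot_norm (-\<beta>) u * Hdot_norm 0 v * Hdot_norm 0 w"
    using Hdot_norm_neg_le_bound[OF assms(1) R3_bound] by (simp only: mult_ac)
qed

end
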